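(* Let $n,k,N$ be positive integers, let $\Omega=(\omega_1,\dots,\omega_k)'$ be a probability vector and let $M=(\mu_{i,j})\in\mathbb{R}^{n\times k}$ be a matrix whose columns are probability vectors on $\{1,\dots,n\}$. Let $c_1,\dots,c_N$ be positive integers (document lengths) such that $\sum_{i=1}^N c_i>0$, $\sum_{i=1}^N c_i(c_i-1)>0$ and $\sum_{i=1}^N c_i(c_i-1)(c_i-2)>0$. Let $X^{(1)},\dots,X^{(N)}$ be $N$ documents generated independently according to the single topic model with parameters $(M,\Omega)$, document $i$ having $c_i$ words. Define: \begin{itemize} \item $\tilde M_1\in\mathbb{R}^n$ by $(\tilde M_1)_h=\dfrac{\sum_{i=1}^N (X^{(i)})_h}{\sum_{i=1}^N c_i}$; \item the symmetric matrix $\tilde M_2\in\mathbb{R}^{n\times n}$ by, for $h\neq l$, $(\tilde M_2)_{h,l}=\dfrac{\sum_{i=1}^N (X^{(i)})_h (X^{(i)})_l}{\sum_{i=1}^N (c_i-1)c_i}$ and $(\tilde M_2)_{h,h}=\dfrac{\sum_{i=1}^N (X^{(i)})_h((X^{(i)})_h-1)}{\sum_{i=1}^N (c_i-1)c_i}$; \item the symmetric tensor $\tilde M_3\in\mathbb{R}^{n\times n\times n}$ (invariant under permutation of its three indices) by, for pairwise distinct $h,l,m$, $(\tilde M_3)_{h,l,m}=\dfrac{\sum_{i=1}^N (X^{(i)})_h (X^{(i)})_l (X^{(i)})_m}{\sum_{i=1}^N (c_i-2)(c_i-1)c_i}$, for $h\neq l$, $(\tilde M_3)_{h,l,l}=\dfrac{\sum_{i=1}^N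 (X^{(i)})_h (X^{(i)})_l ((X^{(i)})_l-1)}{\sum_{i=1}^N (c_i-2)(c_i-1)c_i}$, and $(\tilde M_3)_{l,l,l}=\dfrac{\sum_{i=1}^N (X^{(i)})_l ((X^{(i)})_l-1)((X^{(i)})_l-2)}{\sum_{i=1}^N (c_i-2)(c_i-1)c_i}$. \end{itemize} Then for all $h,l,m\in\{1,\dots,n\}$: $\mathbb{E}[(\tilde M_1)_h]=\sum_{j=1}^k \omega_j\mu_{h,j}$, $\mathbb{E}[(\tilde M_2)_{h,l}]=\sum_{j=1}^k\omega_j\mu_{h,j}\mu_{l,j}$, and $\mathbb{E}[(\tilde M_3)_{h,l,m}]=\sum_{j=1}^k\omega_j\mu_{h,j}\mu_{l,j}\mu_{m,j}$.
   Context: Single topic model: for each document independently, a hidden topic $Y\in\{1,\dots,k\}$ is drawn with $\mathbb{P}(Y=j)=\omega_j$; given $Y=j$, each of the $c_i$ words of the document is drawn independently, word $h\in\{1,\dots,n\}$ having probability $\mu_{h,j}$. A word is encoded as the standard basis vector $e_h\in\mathbb{R}^n$, and $X^{(i)}\in\mathbb{R}^n$ is the sum of the encodings of the words of document $i$, i.e. $(X^{(i)})_h$ is the number of occurrences of word $h$ in document $i$. The lengths $c_i$ are fixed (non-random). *)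

theory Defs
  imports "HOL-Probability.Probability"
begin

(* Conventions: words are indexed 0..n-1, topics 0..k-1, documents 0..N-1.
   omega j = \<omega>_{j+1}; mu h j = \<mu>_{h+1,j+1}; c i = c_{i+1}. *)

definition topic_pmf :: "nat \<Rightarrow> (nat \<Rightarrow> real) \<Rightarrow> nat pmf" where
  "topic_pmf k omega = embed_pmf (\<lambda>j. if j < k then omega j else 0)"

definition word_pmf :: "nat \<Rightarrow> (nat \<Rightarrow> nat \<Rightarrow> real) \<Rightarrow> nat \<Rightarrow> nat pmf" where
  "word_pmf n mu j = embed_pmf (\<lambda>h. if h < n then mu h j else 0)"

definition doc_pmf :: "nat \<Rightarrow> nat \<Rightarrow> (nat \<Rightarrow> real) \<Rightarrow> (nat \<Rightarrow> nat \<Rightarrow> real) \<Rightarrow> nat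
    \<Rightarrow> (nat \<Rightarrow> nat) pmf" where
  "doc_pmf n k omega mu c =
     do { y \<leftarrow> topic_pmf k omega;
          ws \<leftarrow> Pi_pmf {..<c} 0 (\<lambda>_. word_pmf n mu y);
          return_pmf (\<lambda>h. card {t. t < c \<and> ws t = h}) }"

(* N independent documents, document i having c i words. X i h = (X^{(i+1)})_h. *)
definition corpus_pmf :: "nat \<Rightarrow> nat \<Rightarrow> (nat \<Rightarrow> real) \<Rightarrow> (nat \<Rightarrow> nat \<Rightarrow> real)
    \<Rightarrow> nat \<Rightarrow> (nat \<Rightarrow> nat) \<Rightarrow> (nat \<Rightarrow> nat \<Rightarrow> nat) pmf" where
  "corpus_pmf n k omega mu N c = Pi_pmf {..<N} (\<lambda>_. 0) (\<lambda>i. doc_pmf n k omega mu (c i))"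

definition M1 :: "nat \<Rightarrow> (nat \<Rightarrow> nat) \<Rightarrow> (nat \<Rightarrow> nat \<Rightarrow> nat) \<Rightarrow> nat \<Rightarrow> real" where
  "M1 N c X h = (\<Sum>i<N. real (X i h)) / (\<Sum>i<N. real (c i))"

definition M2 :: "nat \<Rightarrow> (nat \<Rightarrow> nat) \<Rightarrow> (nat \<Rightarrow> nat \<Rightarrow> nat) \<Rightarrow> nat \<Rightarrow> nat \<Rightarrow> real" where
  "M2 N c X h l =
     (if h \<noteq> l then (\<Sum>i<N. real (X i h) * real (X i l))
      else (\<Sum>i<N. real (X i h) * (real (X i h) - 1)))
     / (\<Sum>i<N. (real (c i) - 1) * real (c i))"

definition M3 :: "nat \<Rightarrow> (nat \<Rightarrow> nat) \<Rightarrow> (nat \<Rightarrow> nat \<Rightarrow> nat) \<Rightarrow> nat \<Rightarrow> nat \<Rightarrow> nat \<Rightarrow> real" where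
  "M3 N c X h l m =
     (if h = l \<and> l = m then
        (\<Sum>i<N. real (X i l) * (real (X i l) - 1) * (real (X i l) - 2))
      else if h = l then   \<comment> \<open>entry (l,l,m) = entry (m,l,l), m \<noteq> l\<close>
        (\<Sum>i<N. real (X i m) * real (X i l) * (real (X i l) - 1))
      else if l = m then   \<comment> \<open>entry (h,l,l), h \<noteq> l\<close>
        (\<Sum>i<N. real (X i h) * real (X i l) * (real (X i l) - 1))
      else if h = m then   \<comment> \<open>entry (h,l,h) = entry (l,h,h), l \<noteq> h\<close>
        (\<Sum>i<N. real (X i l) * real (X i h) * (real (X i h) - 1))
      else
        (\<Sum>i<N. real (X i h) * real (X i l) * real (X i m)))
     / (\<Sum>i<N. (real (c i) - 2) * (real (c i) - 1) * real (c i))"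

end

theory Submission
  imports Defs
begin

text \<open>
  The numerators of the estimators are mixed falling factorials of the word counts, and adding
  one word y changes such a falling factorial of order r by indicator terms [y = a] times
  falling factorials of order r - 1. Induction on c then gives
  \<open>c(c-1)\<cdots>(c-r+1) \<mu>_{a,j}\<cdots>\<mu>_{d,j}\<close> as their conditional expectation; averaging over the
  topic and summing over the independent documents produces exactly the normalising denominators.
\<close>

lemma expectation_bind_pmf_finite:
  fixes f :: "'b \<Rightarrow> real"
  assumes "finite (set_pmf p)" and "\<And>x. x \<in> set_pmf p \<Longrightarrow> finite (set_pmf (q x))"
  shows "measure_pmf.expectation (p \<bind> q) f
       = measure_pmf.expectation p (\<lambda>x. measure_pmf.expectation (q x) f)"
  using assms by (simp add: pmf_expectation_bind[of "set_pmf p"] integral_measure_pmf[of "set_pmf p"])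

lemma expectation_indicator_eq_pmf:
  "measure_pmf.expectation p (\<lambda>y. if y = a then 1 else 0 :: real) = pmf p a"
  by (subst integral_measure_pmf_real[of "{a}"]) (auto split: if_splits)

lemma finite_set_pmf_Pi_pmf:
  assumes "finite A" and "\<And>i. i \<in> A \<Longrightarrow> finite (set_pmf (p i))"
  shows "finite (set_pmf (Pi_pmf A d p))"
  using assms by (auto simp: set_Pi_pmf)

lemma expectation_Pi_pmf_lessThan_Suc:
  fixes g :: "(nat \<Rightarrow> 'a) \<Rightarrow> real"
  assumes "finite (set_pmf q)"
  shows "measure_pmf.expectation (Pi_pmf {..<Suc c} d (\<lambda>_. q)) g
       = measure_pmf.expectation q
           (\<lambda>y. measure_pmf.expectation (Pi_pmf {..<c} d (\<lambda>_. q)) (\<lambda>ws. g (ws(c := y))))"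
  using assms
  by (simp add: lessThan_Suc Pi_pmf_insert' expectation_bind_pmf_finite finite_set_pmf_Pi_pmf)

lemma expectation_Pi_pmf_sum:
  fixes F :: "'i \<Rightarrow> 'a \<Rightarrow> real"
  assumes "finite A" and "\<And>i. i \<in> A \<Longrightarrow> finite (set_pmf (p i))"
  shows "measure_pmf.expectation (Pi_pmf A d p) (\<lambda>X. \<Sum>i\<in>A. F i (X i))
       = (\<Sum>i\<in>A. measure_pmf.expectation (p i) (F i))"
proof -
  have "measure_pmf.expectation (Pi_pmf A d p) (\<lambda>X. F i (X i)) = measure_pmf.expectation (p i) (F i)"
    if "i \<in> A" for i
    using Pi_pmf_component[OF assms(1), of i d p] that integral_map_pmf[of "\<lambda>X. X i" "Pi_pmf A d p" "F i"]
    by simp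
  then show ?thesis
    using assms by (simp add: integrable_measure_pmf_finite finite_set_pmf_Pi_pmf)
qed

lemma pmf_embed_pmf_lessThan:
  fixes f :: "nat \<Rightarrow> real"
  assumes "\<And>x. x < k \<Longrightarrow> f x \<ge> 0" and "(\<Sum>x<k. f x) = 1"
  shows "pmf (embed_pmf (\<lambda>x. if x < k then f x else 0)) x = (if x < k then f x else 0)"
proof (rule pmf_embed_pmf)
  have "(\<integral>\<^sup>+x. ennreal (if x < k then f x else 0) \<partial>count_space UNIV)
      = (\<integral>\<^sup>+x. ennreal (f x) \<partial>count_space {..<k})"
    by (auto simp: nn_integral_count_space_indicator intro!: nn_integral_cong split: split_indicator)
  also have "\<dots> = ennreal (\<Sum>x<k. f x)"
    using assms(1) by (simp add: nn_integral_count_space_finite) (rule sum_ennreal, simp)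
  finally show "(\<integral>\<^sup>+x. ennreal (if x < k then f x else 0) \<partial>count_space UNIV) = 1"
    using assms(2) by simp
qed (use assms in auto)

definition word_count :: "nat \<Rightarrow> (nat \<Rightarrow> 'a) \<Rightarrow> 'a \<Rightarrow> real" where
  "word_count c ws a = real (card {t. t < c \<and> ws t = a})"

text \<open>
  \<open>falling2 x a b\<close> is \<open>x a * x b\<close> for \<open>a \<noteq> b\<close> and \<open>x a * (x a - 1)\<close> for \<open>a = b\<close>; likewise
  \<open>falling3\<close> is the product of falling factorials of \<open>x\<close> according to the coincidences among
  \<open>a, b, d\<close>.
\<close>

definition falling2 :: "('a \<Rightarrow> real) \<Rightarrow> 'a \<Rightarrow> 'a \<Rightarrow> real" where
  "falling2 x a b = x a * x b - (if a = b then x a else 0)"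

definition falling3 :: "('a \<Rightarrow> real) \<Rightarrow> 'a \<Rightarrow> 'a \<Rightarrow> 'a \<Rightarrow> real" where
  "falling3 x a b d = x a * x b * x d - (if a = b then x a * x d else 0)
     - (if b = d then x a * x b else 0) - (if a = d then x a * x b else 0)
     + (if a = b \<and> b = d then 2 * x a else 0)"

lemma word_count_0 [simp]: "word_count 0 ws a = 0"
  by (simp add: word_count_def)

lemma word_count_fun_upd:
  "word_count (Suc c) (ws(c := y)) = (\<lambda>a. word_count c ws a + (if y = a then 1 else 0))"
proof
  fix a
  have "{t. t < Suc c \<and> (ws(c := y)) t = a}
      = (if y = a then insert c {t. t < c \<and> ws t = a} else {t. t < c \<and> ws t = a})"
    by (auto simp: less_Suc_eq)
  then show "word_count (Suc c) (ws(c := y)) a = word_count c ws a + (if y = a then 1 else 0)"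
    by (simp add: word_count_def)
qed

lemma falling2_add_unit:
  "falling2 (\<lambda>a. x a + (if y = a then 1 else 0)) a b
   = falling2 x a b + (if y = b then 1 else 0) * x a + (if y = a then 1 else 0) * x b"
  by (auto simp: falling2_def algebra_simps)

lemma falling3_add_unit:
  "falling3 (\<lambda>a. x a + (if y = a then 1 else 0)) a b d
   = falling3 x a b d + (if y = a then 1 else 0) * falling2 x b d
     + (if y = b then 1 else 0) * falling2 x a d + (if y = d then 1 else 0) * falling2 x a b"
  by (cases "a = b"; cases "b = d"; cases "a = d"; cases "y = a"; cases "y = b"; cases "y = d")
     (simp_all add: falling2_def falling3_def algebra_simps)

lemma expectation_word_count:
  assumes "finite (set_pmf q)"
  shows "measure_pmf.expectation (Pi_pmf {..<c} d (\<lambda>_. q)) (\<lambda>ws. word_count c ws a)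
       = real c * pmf q a"
proof (induction c)
  case (Suc c)
  show ?case
    using assms
    by (simp add: Suc.IH expectation_Pi_pmf_lessThan_Suc word_count_fun_upd
        integrable_measure_pmf_finite finite_set_pmf_Pi_pmf expectation_indicator_eq_pmf algebra_simps)
qed simp

lemma expectation_falling2_word_count:
  assumes "finite (set_pmf q)"
  shows "measure_pmf.expectation (Pi_pmf {..<c} d (\<lambda>_. q)) (\<lambda>ws. falling2 (word_count c ws) a b)
       = real c * (real c - 1) * pmf q a * pmf q b"
proof (induction c)
  case (Suc c)
  show ?case
    using assms
    by (simp add: Suc.IH expectation_Pi_pmf_lessThan_Suc word_count_fun_upd falling2_add_unit
        integrable_measure_pmf_finite finite_set_pmf_Pi_pmf expectation_word_count
        expectation_indicator_eq_pmf algebra_simps)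
qed (simp add: falling2_def)

lemma expectation_falling3_word_count:
  assumes "finite (set_pmf q)"
  shows "measure_pmf.expectation (Pi_pmf {..<c} d (\<lambda>_. q)) (\<lambda>ws. falling3 (word_count c ws) a b e)
       = real c * (real c - 1) * (real c - 2) * pmf q a * pmf q b * pmf q e"
proof (induction c)
  case (Suc c)
  show ?case
    using assms
    by (simp add: Suc.IH expectation_Pi_pmf_lessThan_Suc word_count_fun_upd falling3_add_unit
        integrable_measure_pmf_finite finite_set_pmf_Pi_pmf expectation_falling2_word_count
        expectation_indicator_eq_pmf algebra_simps)
qed (simp add: falling3_def)

locale single_topic_model =
  fixes n k :: nat and omega :: "nat \<Rightarrow> real" and mu :: "nat \<Rightarrow> nat \<Rightarrow> real"
  assumes omega_nonneg: "\<And>j. j < k \<Longrightarrow> omega j \<ge> 0" and sum_omega: "(\<Sum>j<k. omega j) = 1"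
    and mu_nonneg: "\<And>h j. h < n \<Longrightarrow> j < k \<Longrightarrow> mu h j \<ge> 0"
    and sum_mu: "\<And>j. j < k \<Longrightarrow> (\<Sum>h<n. mu h j) = 1"
begin

lemma pmf_topic_pmf: "pmf (topic_pmf k omega) j = (if j < k then omega j else 0)"
  unfolding topic_pmf_def by (rule pmf_embed_pmf_lessThan) (simp_all add: omega_nonneg sum_omega)

lemma set_pmf_topic_pmf: "set_pmf (topic_pmf k omega) \<subseteq> {..<k}"
  by (auto simp: set_pmf_eq pmf_topic_pmf split: if_splits)

lemma pmf_word_pmf: "j < k \<Longrightarrow> pmf (word_pmf n mu j) h = (if h < n then mu h j else 0)"
  unfolding word_pmf_def by (rule pmf_embed_pmf_lessThan) (simp_all add: mu_nonneg sum_mu)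

lemma finite_set_pmf_word_pmf: "j < k \<Longrightarrow> finite (set_pmf (word_pmf n mu j))"
  by (rule finite_subset[of _ "{..<n}"]) (auto simp: set_pmf_eq pmf_word_pmf split: if_splits)

lemma doc_pmf_eq_bind_map:
  "doc_pmf n k omega mu c
   = topic_pmf k omega \<bind>
       (\<lambda>j. map_pmf (\<lambda>ws h. card {t. t < c \<and> ws t = h}) (Pi_pmf {..<c} 0 (\<lambda>_. word_pmf n mu j)))"
  by (simp add: doc_pmf_def map_pmf_def)

lemma finite_set_pmf_doc_pmf: "finite (set_pmf (doc_pmf n k omega mu c))"
proof -
  have "finite (set_pmf (topic_pmf k omega))"
    using set_pmf_topic_pmf by (rule finite_subset) simp
  moreover have "j \<in> set_pmf (topic_pmf k omega) \<Longrightarrow> finite (set_pmf (word_pmf n mu j))" for j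
    using set_pmf_topic_pmf finite_set_pmf_word_pmf by auto
  ultimately show ?thesis
    by (simp add: doc_pmf_eq_bind_map finite_set_pmf_Pi_pmf)
qed

lemma expectation_doc_pmf:
  fixes G :: "(nat \<Rightarrow> nat) \<Rightarrow> real"
  shows "measure_pmf.expectation (doc_pmf n k omega mu c) G
    = (\<Sum>j<k. omega j * measure_pmf.expectation (Pi_pmf {..<c} 0 (\<lambda>_. word_pmf n mu j))
          (\<lambda>ws. G (\<lambda>h. card {t. t < c \<and> ws t = h})))"
  unfolding doc_pmf_eq_bind_map
  by (subst pmf_expectation_bind[of "{..<k}"])
     (simp_all add: set_pmf_topic_pmf pmf_topic_pmf finite_set_pmf_Pi_pmf finite_set_pmf_word_pmf)

lemma expectation_doc_count:
  assumes "a < n"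
  shows "measure_pmf.expectation (doc_pmf n k omega mu c) (\<lambda>X. real (X a))
       = real c * (\<Sum>j<k. omega j * mu a j)"
proof -
  have "omega j * measure_pmf.expectation (Pi_pmf {..<c} 0 (\<lambda>_. word_pmf n mu j)) (\<lambda>ws. word_count c ws a)
      = real c * (omega j * mu a j)" if "j < k" for j
    using that assms by (simp add: expectation_word_count finite_set_pmf_word_pmf pmf_word_pmf)
  then show ?thesis
    unfolding expectation_doc_pmf word_count_def[symmetric] sum_distrib_left by (intro sum.cong) auto
qed

lemma expectation_doc_falling2:
  assumes "a < n" and "b < n"
  shows "measure_pmf.expectation (doc_pmf n k omega mu c) (\<lambda>X. falling2 (\<lambda>h. real (X h)) a b)
       = real c * (real c - 1) * (\<Sum>j<k. omega j * mu a j * mu b j)"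
proof -
  have "omega j * measure_pmf.expectation (Pi_pmf {..<c} 0 (\<lambda>_. word_pmf n mu j))
          (\<lambda>ws. falling2 (word_count c ws) a b)
      = real c * (real c - 1) * (omega j * mu a j * mu b j)" if "j < k" for j
    using that assms by (simp add: expectation_falling2_word_count finite_set_pmf_word_pmf pmf_word_pmf)
  then show ?thesis
    unfolding expectation_doc_pmf word_count_def[symmetric] sum_distrib_left by (intro sum.cong) auto
qed

lemma expectation_doc_falling3:
  assumes "a < n" and "b < n" and "d < n"
  shows "measure_pmf.expectation (doc_pmf n k omega mu c) (\<lambda>X. falling3 (\<lambda>h. real (X h)) a b d)
       = real c * (real c - 1) * (real c - 2) * (\<Sum>j<k. omega j * mu a j * mu b j * mu d j)"
proof -
  have "omega j * measure_pmf.expectation (Pi_pmf {..<c} 0 (\<lambda>_. word_pmf n mu j))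
          (\<lambda>ws. falling3 (word_count c ws) a b d)
      = real c * (real c - 1) * (real c - 2) * (omega j * mu a j * mu b j * mu d j)" if "j < k" for j
    using that assms by (simp add: expectation_falling3_word_count finite_set_pmf_word_pmf pmf_word_pmf)
  then show ?thesis
    unfolding expectation_doc_pmf word_count_def[symmetric] sum_distrib_left by (intro sum.cong) auto
qed

lemma expectation_corpus_normalised:
  fixes F :: "(nat \<Rightarrow> nat) \<Rightarrow> real"
  assumes "\<And>c. measure_pmf.expectation (doc_pmf n k omega mu c) F = w c * m"
    and "(\<Sum>i<N. w (c i)) \<noteq> 0"
  shows "measure_pmf.expectation (corpus_pmf n k omega mu N c)
           (\<lambda>X. (\<Sum>i<N. F (X i)) / (\<Sum>i<N. w (c i))) = m"
proof -
  have "measure_pmf.expectation (corpus_pmf n k omega mu N c) (\<lambda>X. \<Sum>i<N. F (X i))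
      = (\<Sum>i<N. w (c i)) * m"
    unfolding corpus_pmf_def
    by (simp add: expectation_Pi_pmf_sum[where F="\<lambda>_. F"] finite_set_pmf_doc_pmf assms(1)
        sum_distrib_right)
  then show ?thesis
    using assms(2) by simp
qed

end

lemma M2_eq_falling2:
  "M2 N c X h l = (\<Sum>i<N. falling2 (\<lambda>a. real (X i a)) h l) / (\<Sum>i<N. (real (c i) - 1) * real (c i))"
  by (simp add: M2_def falling2_def algebra_simps)

lemma M3_eq_falling3:
  "M3 N c X h l m = (\<Sum>i<N. falling3 (\<lambda>a. real (X i a)) h l m)
    / (\<Sum>i<N. (real (c i) - 2) * (real (c i) - 1) * real (c i))"
  by (cases "h = l"; cases "l = m"; cases "h = m") (simp_all add: M3_def falling3_def algebra_simps)

theorem theorem2p1: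
  fixes n k N :: nat and omega :: "nat \<Rightarrow> real" and mu :: "nat \<Rightarrow> nat \<Rightarrow> real"
    and c :: "nat \<Rightarrow> nat"
  assumes "n \<ge> 1" and "k \<ge> 1" and "N \<ge> 1"
    and "\<And>j. j < k \<Longrightarrow> omega j \<ge> 0" and "(\<Sum>j<k. omega j) = 1"
    and "\<And>h j. h < n \<Longrightarrow> j < k \<Longrightarrow> mu h j \<ge> 0"
    and "\<And>j. j < k \<Longrightarrow> (\<Sum>h<n. mu h j) = 1"
    and "\<And>i. i < N \<Longrightarrow> c i \<ge> 1"
    and "(\<Sum>i<N. real (c i)) > 0"
    and "(\<Sum>i<N. real (c i) * (real (c i) - 1)) > 0"
    and "(\<Sum>i<N. real (c i) * (real (c i) - 1) * (real (c i) - 2)) > 0"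
  shows "\<forall>h<n. \<forall>l<n. \<forall>m<n.
     measure_pmf.expectation (corpus_pmf n k omega mu N c) (\<lambda>X. M1 N c X h)
       = (\<Sum>j<k. omega j * mu h j)
   \<and> measure_pmf.expectation (corpus_pmf n k omega mu N c) (\<lambda>X. M2 N c X h l)
       = (\<Sum>j<k. omega j * mu h j * mu l j)
   \<and> measure_pmf.expectation (corpus_pmf n k omega mu N c) (\<lambda>X. M3 N c X h l m)
       = (\<Sum>j<k. omega j * mu h j * mu l j * mu m j)"
proof (intro allI impI conjI)
  interpret single_topic_model n k omega mu
    by unfold_locales (use assms in auto)
  fix h l m assume "h < n" "l < n" "m < n"
  show "measure_pmf.expectation (corpus_pmf n k omega mu N c) (\<lambda>X. M1 N c X h)
      = (\<Sum>j<k. omega j * mu h j)"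
    unfolding M1_def
    by (rule expectation_corpus_normalised) (use assms(9) \<open>h < n\<close> expectation_doc_count in auto)
  show "measure_pmf.expectation (corpus_pmf n k omega mu N c) (\<lambda>X. M2 N c X h l)
      = (\<Sum>j<k. omega j * mu h j * mu l j)"
    unfolding M2_eq_falling2
    by (rule expectation_corpus_normalised)
       (use assms(10) \<open>h < n\<close> \<open>l < n\<close> expectation_doc_falling2 in \<open>auto simp: mult_ac\<close>)
  show "measure_pmf.expectation (corpus_pmf n k omega mu N c) (\<lambda>X. M3 N c X h l m)
      = (\<Sum>j<k. omega j * mu h j * mu l j * mu m j)"
    unfolding M3_eq_falling3
    by (rule expectation_corpus_normalised)
       (use assms(11) \<open>h < n\<close> \<open>l < n\<close> \<open>m < n\<close> expectation_doc_falling3 in \<open>auto simp: mult_ac\<close>)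
qed

end
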